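(* Let $(R,\Lambda,S)$ be a generalised Renner–Coxeter system, $e,f\in\Lambda$ and $w\in\mathrm{Red}(e,f)$. (i) There exists $h\in\Lambda$ such that $w\in W(h)$ and $ewf=wh$. (ii) For such $h$, $w\in W_\star(h)$; therefore $wh=h$.
   Context: For a monoid $R$, $E(R)$ is its set of idempotents, $G(R)$ its unit group. $R$ is factorisable if $R=E(R)G(R)=G(R)E(R)$ and idempotents commute; then $E(R)$ is a semilattice ($e\le f\iff ef=fe=e$) on which $G(R)$ acts by conjugation. For $e\in E(R)$, $W(e)=\{w\in G(R)\mid we=ew\}$, $W_\star(e)=\{w\mid we=ew=e\}$. For a Coxeter system $(W,S)$, $W_I$ is the subgroup generated by $I\subseteq S$. A generalised Renner–Coxeter system is a triple $(R,\Lambda,S)$ with: (ECS1) $R$ factorisable; (ECS2) $\Lambda\subseteq E(R)$ contains exactly one element of each $G(R)$-orbit and is closed under multiplication; (ECS3) $(G(R),S)$ is a Coxeter system; (ECS4) for $e_1\le e_2$ in $E(R)$ there are $w\in G(R)$, $f_1\le f_2$ in $\Lambda$ with $wf_iw^{-1}=e_i$; (ECS5) for $e\in\Lambda$, $W(e)$, $W_\star(e)$ are of the form $W_I$; (ECS6) with $\lambda^\star(e)=\{s\in S\mid se=es\ne e\}$, $e\le f$ in $\Lambda$ implies $\lambda^\star(e)\subseteq\lambda^\star(f)$. Let $\lambda(e)\subseteq S$ with $W(e)=W_{\lambda(e)}$, $W=G(R)$. $\mathrm{Red}(e,f)$ is the set of $w\in W$ which are of minimal Coxeter length in the double coset $W_{\lambda(e)}wW_{\lambda(f)}$.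 *)

theory Defs
  imports Main
begin

text \<open>The monoid R is modelled as a type of class monoid_mult (R = UNIV).\<close>

definition units_of_monoid :: "'a::monoid_mult set" ("G\<^sub>R") where
  "units_of_monoid = {u. \<exists>v. u * v = 1 \<and> v * u = 1}"

definition minv :: "'a::monoid_mult \<Rightarrow> 'a" where
  "minv u = (THE v. u * v = 1 \<and> v * u = 1)"

definition idems :: "'a::monoid_mult set" ("E\<^sub>R") where
  "idems = {e. e * e = e}"

definition factorisable :: "'a::monoid_mult itself \<Rightarrow> bool" where
  "factorisable _ \<longleftrightarrow>
     (UNIV :: 'a set) = {e * g | e g. e \<in> idems \<and> g \<in> units_of_monoid} \<and>
     (UNIV :: 'a set) = {g * e | e g. e \<in> idems \<and> g \<in> units_of_monoid} \<and>
     (\<forall>e\<in>(idems :: 'a set). \<forall>f\<in>idems. e * f = f * e)"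

definition ileq :: "'a::monoid_mult \<Rightarrow> 'a \<Rightarrow> bool" where
  "ileq e f \<longleftrightarrow> e * f = e \<and> f * e = e"

text \<open>Coxeter systems: S consists of involutions generating the unit group, and the
  unit group is presented (as a monoid, hence as a group) by the relators
  (s t)^m(s,t), s,t in S, with m(s,t) the order of s t (m(s,s) = 1 gives s s = 1).\<close>

definition coxeter_relator :: "'a::monoid_mult set \<Rightarrow> 'a list \<Rightarrow> bool" where
  "coxeter_relator S r \<longleftrightarrow> (\<exists>s\<in>S. \<exists>t\<in>S. \<exists>m::nat. 0 < m \<and> (s * t) ^ m = 1 \<and>
      (\<forall>k. 0 < k \<and> k < m \<longrightarrow> (s * t) ^ k \<noteq> 1) \<and> r = concat (replicate m [s, t]))"

inductive coxeter_cong :: "'a::monoid_mult set \<Rightarrow> 'a list \<Rightarrow> 'a list \<Rightarrow> bool"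
  for S :: "'a set" where
  refl: "coxeter_cong S u u"
| sym: "coxeter_cong S u v \<Longrightarrow> coxeter_cong S v u"
| trans: "coxeter_cong S u v \<Longrightarrow> coxeter_cong S v w \<Longrightarrow> coxeter_cong S u w"
| ins: "coxeter_relator S r \<Longrightarrow> coxeter_cong S (xs @ ys) (xs @ r @ ys)"

definition coxeter_system :: "'a::monoid_mult set \<Rightarrow> bool" where
  "coxeter_system S \<longleftrightarrow>
     S \<subseteq> units_of_monoid \<and>
     (\<forall>s\<in>S. s \<noteq> 1 \<and> s * s = 1) \<and>
     units_of_monoid = {prod_list xs | xs. xs \<in> lists S} \<and>
     (\<forall>u\<in>lists S. \<forall>v\<in>lists S. prod_list u = prod_list v \<longrightarrow> coxeter_cong S u v)"

definition WI :: "'a::monoid_mult set \<Rightarrow> 'a set" where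
  "WI I = {prod_list xs | xs. xs \<in> lists I}"

definition cox_len :: "'a::monoid_mult set \<Rightarrow> 'a \<Rightarrow> nat" where
  "cox_len S w = (LEAST n. \<exists>xs\<in>lists S. length xs = n \<and> prod_list xs = w)"

definition Wc :: "'a::monoid_mult \<Rightarrow> 'a set" where
  "Wc e = {w \<in> units_of_monoid. w * e = e * w}"

definition Wstar :: "'a::monoid_mult \<Rightarrow> 'a set" where
  "Wstar e = {w \<in> units_of_monoid. w * e = e \<and> e * w = e}"

definition lambda_star :: "'a::monoid_mult set \<Rightarrow> 'a \<Rightarrow> 'a set" where
  "lambda_star S e = {s \<in> S. s * e = e * s \<and> s * e \<noteq> e}"

definition gen_renner_coxeter :: "'a::monoid_mult set \<Rightarrow> 'a set \<Rightarrow> bool" where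
  "gen_renner_coxeter \<Lambda> S \<longleftrightarrow>
     factorisable TYPE('a) \<and>
     \<Lambda> \<subseteq> idems \<and>
     (\<forall>e\<in>idems. \<exists>!f. f \<in> \<Lambda> \<and> (\<exists>w\<in>units_of_monoid. w * f * minv w = e)) \<and>
     (\<forall>e\<in>\<Lambda>. \<forall>f\<in>\<Lambda>. e * f \<in> \<Lambda>) \<and>
     coxeter_system S \<and>
     (\<forall>e1\<in>idems. \<forall>e2\<in>idems. ileq e1 e2 \<longrightarrow>
        (\<exists>w\<in>units_of_monoid. \<exists>f1\<in>\<Lambda>. \<exists>f2\<in>\<Lambda>. ileq f1 f2 \<and>
           w * f1 * minv w = e1 \<and> w * f2 * minv w = e2)) \<and>
     (\<forall>e\<in>\<Lambda>. (\<exists>I\<subseteq>S. Wc e = WI I) \<and> (\<exists>I\<subseteq>S. Wstar e = WI I)) \<and>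
     (\<forall>e\<in>\<Lambda>. \<forall>f\<in>\<Lambda>. ileq e f \<longrightarrow> lambda_star S e \<subseteq> lambda_star S f)"

text \<open>lambda(e): the subset I of S with W(e) = W_I (unique in a Coxeter system).\<close>
definition lam :: "'a::monoid_mult set \<Rightarrow> 'a \<Rightarrow> 'a set" where
  "lam S e = (SOME I. I \<subseteq> S \<and> Wc e = WI I)"

definition Red :: "'a::monoid_mult set \<Rightarrow> 'a \<Rightarrow> 'a \<Rightarrow> 'a set" where
  "Red S e f = {w \<in> units_of_monoid.
     \<forall>x\<in>WI (lam S e). \<forall>y\<in>WI (lam S f). cox_len S w \<le> cox_len S (x * w * y)}"

end

theory Submission
  imports Defs "HOL-Library.Sublist"
begin

text \<open>Let \<open>h\<^sub>0 = w\<^sup>-\<^sup>1 e w f\<close>, an idempotent below \<open>f\<close> with \<open>e w f = w h\<^sub>0\<close>. By (ECS4) and the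
  uniqueness of orbit representatives, \<open>h\<^sub>0\<close> and \<open>e (w f w\<^sup>-\<^sup>1)\<close> are conjugate, by \<open>v \<in> W(f)\<close>
  and \<open>u \<in> W(e)\<close>, to one and the same \<open>k \<in> \<Lambda>\<close> with \<open>k \<le> e\<close>. Then \<open>u\<^sup>-\<^sup>1 w v\<close> centralises \<open>k\<close>,
  and (ECS6) splits it as \<open>b a\<close> with \<open>b \<in> W(e)\<close> and \<open>a \<in> W\<^sub>\<star>(k)\<close>; so the double coset
  \<open>W(e) w W(f)\<close> meets the parabolic subgroup \<open>W\<^sub>\<star>(k)\<close>. As \<open>w\<close> is its minimal element,
  Deodhar's lemma and the fact that reduced words of elements of a parabolic subgroup only
  use its generators give \<open>w \<in> W\<^sub>\<star>(k)\<close> and \<open>a = p w q\<close> with \<open>q \<in> W(f) \<inter> W\<^sub>\<star>(k)\<close>. Computing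
  \<open>a\<^sup>-\<^sup>1 e a f\<close> from both factorisations of \<open>a\<close> yields \<open>h\<^sub>0 = k\<close>. The Coxeter group input, the
  deletion condition, is derived from the presentation by Tits' reflection-counting argument.\<close>

section \<open>Units and idempotents\<close>

lemma one_in_units: "1 \<in> (G\<^sub>R :: 'a::monoid_mult set)"
  unfolding units_of_monoid_def by auto

lemma units_mult: "u \<in> G\<^sub>R \<Longrightarrow> v \<in> G\<^sub>R \<Longrightarrow> u * v \<in> (G\<^sub>R :: 'a::monoid_mult set)"
  unfolding units_of_monoid_def
proof clarify
  fix a b assume "u * a = 1" "a * u = 1" "v * b = 1" "b * v = 1"
  then have "u * v * (b * a) = 1 \<and> b * a * (u * v) = 1"
    by (metis mult.assoc mult_1_left)
  then show "\<exists>c. u * v * c = 1 \<and> c * (u * v) = 1" by blast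
qed

lemma minv_inverse:
  assumes "u \<in> (G\<^sub>R :: 'a::monoid_mult set)"
  shows "u * minv u = 1" "minv u * u = 1"
proof -
  obtain v where v: "u * v = 1" "v * u = 1"
    using assms unfolding units_of_monoid_def by blast
  have "minv u = v"
    unfolding minv_def
  proof (rule the_equality)
    show "\<And>x. u * x = 1 \<and> x * u = 1 \<Longrightarrow> x = v" by (metis v mult.assoc mult_1_left mult_1_right)
  qed (use v in auto)
  then show "u * minv u = 1" "minv u * u = 1" using v by auto
qed

lemma minv_mult_cancel_left: "u \<in> G\<^sub>R \<Longrightarrow> minv u * (u * z) = (z :: 'a::monoid_mult)"
  by (simp add: minv_inverse(2) mult.assoc[symmetric])

lemma mult_minv_cancel_left: "u \<in> G\<^sub>R \<Longrightarrow> u * (minv u * z) = (z :: 'a::monoid_mult)"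
  by (simp add: minv_inverse(1) mult.assoc[symmetric])

lemma minv_in_units: "u \<in> G\<^sub>R \<Longrightarrow> minv u \<in> (G\<^sub>R :: 'a::monoid_mult set)"
  using minv_inverse unfolding units_of_monoid_def by blast

lemma units_cancel_left: "u \<in> G\<^sub>R \<Longrightarrow> u * a = u * b \<Longrightarrow> a = (b :: 'a::monoid_mult)"
  using minv_mult_cancel_left by metis

lemma minv_eqI: "u \<in> G\<^sub>R \<Longrightarrow> u * v = 1 \<Longrightarrow> minv u = (v :: 'a::monoid_mult)"
  by (rule units_cancel_left[of u]) (simp_all add: minv_inverse(1))

lemma minv_one: "minv (1 :: 'a::monoid_mult) = 1"
  by (simp add: minv_eqI one_in_units)

lemma minv_mult:
  "u \<in> G\<^sub>R \<Longrightarrow> v \<in> G\<^sub>R \<Longrightarrow> minv (u * v) = minv v * (minv u :: 'a::monoid_mult)"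
  by (rule minv_eqI) (simp_all add: units_mult mult.assoc mult_minv_cancel_left minv_inverse)

lemma conj_idem:
  assumes "v * u = 1" "x \<in> E\<^sub>R" shows "u * x * v \<in> (E\<^sub>R :: 'a::monoid_mult set)"
proof -
  have "u * x * v * (u * x * v) = u * (x * (v * u) * x) * v" by (simp add: mult.assoc)
  then show ?thesis using assms unfolding idems_def by simp
qed

lemma idems_mult_ileq:
  assumes "x \<in> E\<^sub>R" "y \<in> E\<^sub>R" "x * y = y * (x :: 'a::monoid_mult)"
  shows "x * y \<in> E\<^sub>R" "ileq (x * y) x" "ileq (x * y) y"
proof -
  have xx: "x * x = x" and yy: "y * y = y" using assms(1,2) unfolding idems_def by auto
  have xyx: "x * y * x = x * y"
    by (simp only: mult.assoc[of x y x] assms(3)[symmetric]) (simp only: mult.assoc[symmetric] xx)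
  have xxy: "x * (x * y) = x * y" by (simp only: mult.assoc[symmetric] xx)
  have xyy: "x * y * y = x * y" by (simp only: mult.assoc yy)
  have yxy: "y * (x * y) = x * y" by (simp only: mult.assoc[symmetric] assms(3)[symmetric]) (simp only: xyy)
  show "x * y \<in> E\<^sub>R" unfolding idems_def using xyx by (simp add: mult.assoc[symmetric] xyy)
  show "ileq (x * y) x" "ileq (x * y) y" unfolding ileq_def using xyx xxy xyy yxy by simp_all
qed

lemma Wc_one: "1 \<in> Wc k"
  unfolding Wc_def using one_in_units by auto

lemma Wc_mult: "a \<in> Wc k \<Longrightarrow> b \<in> Wc k \<Longrightarrow> a * b \<in> Wc (k :: 'a::monoid_mult)"
  unfolding Wc_def by (auto simp: units_mult) (metis mult.assoc)

lemma Wc_minv: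
  assumes "a \<in> Wc (k :: 'a::monoid_mult)" shows "minv a \<in> Wc k"
proof -
  have a: "a \<in> G\<^sub>R" "a * k = k * a" using assms unfolding Wc_def by auto
  have "minv a * k = minv a * (k * a) * minv a" using minv_inverse[OF a(1)] by (simp add: mult.assoc)
  also have "\<dots> = minv a * (a * k) * minv a" using a(2) by simp
  also have "\<dots> = k * minv a" using minv_mult_cancel_left[OF a(1)] by (simp add: mult.assoc)
  finally show ?thesis unfolding Wc_def using minv_in_units[OF a(1)] by simp
qed

lemma Wc_if_conj_fixed:
  assumes "u \<in> G\<^sub>R" "u * k * minv u = (k :: 'a::monoid_mult)" shows "u \<in> Wc k"
proof -
  have "u * k = u * k * minv u * u" using minv_inverse(2)[OF assms(1)] by (simp add: mult.assoc)
  then show ?thesis unfolding Wc_def using assms by simp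
qed

lemma conj_eq_imp_Wc:
  assumes "u \<in> G\<^sub>R" "y \<in> G\<^sub>R" "u * k * minv u = y * k * minv (y :: 'a::monoid_mult)"
  shows "minv u * y \<in> Wc k"
proof -
  have "k * (minv u * y) = minv u * (u * k * minv u) * y"
    using minv_mult_cancel_left[OF assms(1)] by (simp add: mult.assoc)
  also have "\<dots> = minv u * y * k"
    using assms(3) minv_inverse(2)[OF assms(2)] by (simp add: mult.assoc)
  finally show ?thesis
    unfolding Wc_def using units_mult[OF minv_in_units assms(2)] assms(1) by simp
qed

lemma Wstar_one: "1 \<in> Wstar k"
  unfolding Wstar_def using one_in_units by auto

lemma Wstar_mult: "a \<in> Wstar k \<Longrightarrow> b \<in> Wstar k \<Longrightarrow> a * b \<in> Wstar (k :: 'a::monoid_mult)"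
  unfolding Wstar_def by (auto simp: units_mult) (metis mult.assoc)+

lemma Wstar_subset_Wc: "Wstar k \<subseteq> Wc k"
  unfolding Wstar_def Wc_def by auto

lemma Wstar_conj_Wc:
  assumes b: "b \<in> Wc k" and s: "s \<in> Wstar (k :: 'a::monoid_mult)"
  shows "minv b * s * b \<in> Wstar k"
proof -
  have bG: "b \<in> G\<^sub>R" "b * k = k * b" and bk': "minv b * k = k * minv b"
    using b Wc_minv[OF b] unfolding Wc_def by auto
  have sG: "s \<in> G\<^sub>R" "s * k = k" "k * s = k" using s unfolding Wstar_def by auto
  have "minv b * s * b * k = minv b * (s * k) * b" using bG(2) by (simp add: mult.assoc)
  also have "\<dots> = minv b * k * b" using sG(2) by simp
  also have "\<dots> = k" using bk' minv_inverse(2)[OF bG(1)] by (simp add: mult.assoc)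
  finally have 1: "minv b * s * b * k = k" .
  have "k * (minv b * s * b) = minv b * (k * s) * b" using bk' by (simp add: mult.assoc[symmetric])
  also have "\<dots> = minv b * k * b" using sG(3) by simp
  also have "\<dots> = k" using bk' minv_inverse(2)[OF bG(1)] by (simp add: mult.assoc)
  finally have 2: "k * (minv b * s * b) = k" .
  show ?thesis
    unfolding Wstar_def using 1 2 units_mult[OF units_mult[OF minv_in_units sG(1)] bG(1)] bG(1) by simp
qed

text \<open>Since \<open>Wc k\<close> normalises \<open>Wstar k\<close>, letters from \<open>Wstar k\<close> can be moved to the right.\<close>
lemma prod_list_Wc_Wstar_split:
  assumes "\<forall>s\<in>set xs. s \<in> Wc e \<inter> Wc k \<or> s \<in> Wstar k"
  obtains b a where "prod_list xs = b * a" "b \<in> Wc e \<inter> Wc (k :: 'a::monoid_mult)" "a \<in> Wstar k"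
  using assms
proof (induction xs arbitrary: thesis)
  case Nil
  then show ?case using Wc_one Wstar_one by (metis IntI mult_1_left prod_list.Nil)
next
  case (Cons s xs)
  then obtain b a where ba: "prod_list xs = b * a" "b \<in> Wc e \<inter> Wc k" "a \<in> Wstar k" by auto
  show ?case
  proof (cases "s \<in> Wc e \<inter> Wc k")
    case True
    then show ?thesis
      using Cons.prems(1)[of "s * b" a] ba Wc_mult[of s _ b] by (simp add: mult.assoc)
  next
    case False
    then have "s \<in> Wstar k" using Cons.prems(2) by auto
    then have c: "minv b * s * b \<in> Wstar k" using Wstar_conj_Wc ba(2) by blast
    have bG: "b \<in> G\<^sub>R" using ba(2) unfolding Wc_def by auto
    have "prod_list (s # xs) = b * (minv b * s * b * a)"
      using ba(1) mult_minv_cancel_left[OF bG] by (simp add: mult.assoc)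
    then show ?thesis using Cons.prems(1) ba(2) Wstar_mult[OF c ba(3)] by blast
  qed
qed

lemma Wstar_conj_fixed:
  assumes "q \<in> Wstar k" shows "q * k * minv q = k"
proof -
  have "q \<in> G\<^sub>R" "q * k = k" "k * q = k" using assms unfolding Wstar_def by auto
  then have "k * minv q = k * q * minv q" by simp
  then show ?thesis using \<open>q * k = k\<close> minv_inverse(1)[OF \<open>q \<in> G\<^sub>R\<close>] by (simp add: mult.assoc)
qed

text \<open>\<open>y \<mapsto> y\<^sup>-\<^sup>1 e y f\<close> turns left multiplication by \<open>W(e)\<close> and right multiplication by
  \<open>W(f)\<close> into conjugation.\<close>
lemma conj_double_coset:
  assumes "p \<in> Wc e" "q \<in> Wc f" "y \<in> (G\<^sub>R :: 'a::monoid_mult set)"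
  shows "minv (p * y * q) * e * (p * y * q) * f = minv q * (minv y * e * y * f) * q"
proof -
  have p: "p \<in> G\<^sub>R" "e * p = p * e" and q: "q \<in> G\<^sub>R" "q * f = f * q"
    using assms unfolding Wc_def by auto
  have "minv (p * y * q) = minv q * minv y * minv p"
    using minv_mult[OF units_mult[OF p(1) assms(3)] q(1)] minv_mult[OF p(1) assms(3)]
    by (simp add: mult.assoc)
  moreover have "minv p * (e * (p * z)) = e * z" for z
    using minv_mult_cancel_left[OF p(1), of "e * z"] p(2) by (simp flip: mult.assoc)
  ultimately show ?thesis using q(2) by (simp add: mult.assoc)
qed

lemma double_coset_twisted_conj_eq:
  assumes c: "c \<in> Wc e" and p: "p \<in> Wc e" and v: "v \<in> Wc f" and q: "q \<in> Wc f" "q \<in> Wstar k"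
    and wG: "w \<in> (G\<^sub>R :: 'a::monoid_mult set)" and eq: "c * w * v = p * w * q"
    and k: "v * k * minv v = minv w * e * w * f"
  shows "minv w * e * w * f = k"
proof -
  define h where "h = minv w * e * w * f"
  have vG: "v \<in> G\<^sub>R" and qG: "q \<in> G\<^sub>R" using v q unfolding Wc_def by auto
  have "k = minv v * (v * k * minv v) * v"
    using minv_mult_cancel_left[OF vG] minv_inverse(2)[OF vG] by (simp add: mult.assoc)
  also have "\<dots> = minv (c * w * v) * e * (c * w * v) * f"
    unfolding k using conj_double_coset[OF c v wG] by simp
  also have "\<dots> = minv q * h * q"
    unfolding eq h_def using conj_double_coset[OF p q(1) wG] by simp
  finally have "h = q * k * minv q"
    using mult_minv_cancel_left[OF qG] minv_inverse(1)[OF qG] by (simp add: mult.assoc)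
  also have "\<dots> = k" using Wstar_conj_fixed[OF q(2)] .
  finally show ?thesis unfolding h_def .
qed

section \<open>Words and their reflections\<close>

lemma prod_list_in_WI: "xs \<in> lists K \<Longrightarrow> prod_list xs \<in> WI K"
  unfolding WI_def by blast

lemma WI_mult: "x \<in> WI K \<Longrightarrow> y \<in> WI K \<Longrightarrow> x * y \<in> WI K"
proof -
  assume "x \<in> WI K" "y \<in> WI K"
  then obtain xs ys where "xs \<in> lists K" "ys \<in> lists K" "x = prod_list xs" "y = prod_list ys"
    unfolding WI_def by blast
  then show ?thesis using prod_list_in_WI[of "xs @ ys" K] by simp
qed

lemma gen_in_WI: "s \<in> K \<Longrightarrow> s \<in> WI K"
  using prod_list_in_WI[of "[s]"] by simp

lemma subseq_in_lists: "subseq ys xs \<Longrightarrow> xs \<in> lists K \<Longrightarrow> ys \<in> lists K"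
  by (auto simp: in_lists_conv_set elim: list_emb_set)

lemma split_at_two_indices:
  assumes "i < j" "j < length xs"
  shows "xs = take i xs @ xs ! i # take (j - Suc i) (drop (Suc i) xs) @ xs ! j # drop (Suc j) xs"
proof -
  let ?D = "drop (Suc i) xs"
  have "take (j - Suc i) ?D @ ?D ! (j - Suc i) # drop (Suc (j - Suc i)) ?D = ?D"
    using assms id_take_nth_drop[of "j - Suc i" ?D] by simp
  then have "take (j - Suc i) ?D @ xs ! j # drop (Suc j) xs = ?D"
    using assms by simp
  then show ?thesis using assms id_take_nth_drop[of i xs] by simp
qed

text \<open>The parity of the number of times a given element
  occurs among these is invariant under the Coxeter relations (Tits' argument), and this
  yields the deletion condition.\<close>

definition word_reflection :: "'a::monoid_mult list \<Rightarrow> nat \<Rightarrow> 'a" where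
  "word_reflection xs j = prod_list (take j xs) * xs ! j * prod_list (rev (take j xs))"

definition reflection_count :: "'a::monoid_mult list \<Rightarrow> 'a \<Rightarrow> nat" where
  "reflection_count xs t = card {j. j < length xs \<and> word_reflection xs j = t}"

lemma word_reflection_append_left:
  "j < length xs \<Longrightarrow> word_reflection (xs @ ys) j = word_reflection xs j"
  by (simp add: word_reflection_def nth_append)

lemma word_reflection_append_right:
  "word_reflection (xs @ ys) (length xs + i) = prod_list xs * word_reflection ys i * prod_list (rev xs)"
  by (simp add: word_reflection_def nth_append mult.assoc)

lemma word_reflection_Cons_0: "word_reflection (x # xs) 0 = x"
  by (simp add: word_reflection_def)

lemma word_reflection_Cons_Suc: "word_reflection (x # xs) (Suc j) = x * word_reflection xs j * x"
  by (simp add: word_reflection_def mult.assoc)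

lemma word_reflection_alternating:
  "j < 2 * m \<Longrightarrow> word_reflection (concat (replicate m [s, t])) j = (s * t) ^ j * s"
proof (induction m arbitrary: j)
  case (Suc m)
  have word: "concat (replicate (Suc m) [s, t]) = s # t # concat (replicate m [s, t])" by simp
  consider "j = 0" | "j = 1" | i where "j = Suc (Suc i)" "i < 2 * m"
    using Suc.prems by (cases j; cases "j - 1") auto
  then show ?case
  proof cases
    case 3
    have "(s * t) ^ Suc (Suc i) * s = s * (t * ((s * t) ^ i * s) * t) * s"
      by (simp add: power_commutes mult.assoc)
    then show ?thesis
      unfolding 3 word word_reflection_Cons_Suc Suc.IH[OF 3(2)] by (simp add: mult.assoc)
  qed (simp_all add: word word_reflection_Cons_0 word_reflection_Cons_Suc mult.assoc)
qed simp

lemma card_shifted_union: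
  fixes n :: nat
  assumes "finite A" "finite B" "\<forall>a\<in>A. a < n"
  shows "card (A \<union> (\<lambda>i. n + i) ` B) = card A + card B"
proof -
  have "card (A \<union> (\<lambda>i. n + i) ` B) = card A + card ((\<lambda>i. n + i) ` B)"
    using assms by (intro card_Un_disjoint) auto
  then show ?thesis by (simp add: card_image)
qed

section \<open>Coxeter groups\<close>

locale coxeter =
  fixes S :: "'a::monoid_mult set"
  assumes coxeter_system: "coxeter_system S"
begin

lemma S_units: "S \<subseteq> G\<^sub>R"
  and S_involution: "s \<in> S \<Longrightarrow> s * s = 1"
  and S_not_one: "s \<in> S \<Longrightarrow> s \<noteq> 1"
  and units_eq_words: "G\<^sub>R = {prod_list xs | xs. xs \<in> lists S}"
  and prod_list_eq_imp_cong:
    "u \<in> lists S \<Longrightarrow> v \<in> lists S \<Longrightarrow> prod_list u = prod_list v \<Longrightarrow> coxeter_cong S u v"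
  using coxeter_system unfolding coxeter_system_def by blast+

lemma prod_list_rev_inverse:
  "xs \<in> lists S \<Longrightarrow> prod_list xs * prod_list (rev xs) = 1 \<and> prod_list (rev xs) * prod_list xs = 1"
proof (induction xs)
  case (Cons x xs)
  then have x: "x * x = 1" and IH: "prod_list xs * prod_list (rev xs) = 1" "prod_list (rev xs) * prod_list xs = 1"
    using S_involution by auto
  have "x * (prod_list xs * prod_list (rev xs)) * x = 1" "prod_list (rev xs) * (x * x) * prod_list xs = 1"
    using IH x by simp_all
  then show ?case by (simp add: mult.assoc)
qed simp

lemma prod_list_in_units: "xs \<in> lists S \<Longrightarrow> prod_list xs \<in> G\<^sub>R"
  using units_eq_words by blast

lemma minv_prod_list: "xs \<in> lists S \<Longrightarrow> minv (prod_list xs) = prod_list (rev xs)"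
  using minv_eqI prod_list_in_units prod_list_rev_inverse by blast

lemma conj_prod_list_eq_iff:
  assumes "xs \<in> lists S"
  shows "prod_list xs * y * prod_list (rev xs) = t \<longleftrightarrow> y = prod_list (rev xs) * t * prod_list xs"
proof -
  have inv: "prod_list xs * prod_list (rev xs) = 1" "prod_list (rev xs) * prod_list xs = 1"
    using prod_list_rev_inverse[OF assms] by auto
  have "prod_list (rev xs) * (prod_list xs * y * prod_list (rev xs)) * prod_list xs
      = (prod_list (rev xs) * prod_list xs) * y * (prod_list (rev xs) * prod_list xs)"
    "prod_list xs * (prod_list (rev xs) * t * prod_list xs) * prod_list (rev xs)
      = (prod_list xs * prod_list (rev xs)) * t * (prod_list xs * prod_list (rev xs))"
    by (simp_all only: mult.assoc)
  then have "prod_list (rev xs) * (prod_list xs * y * prod_list (rev xs)) * prod_list xs = y"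
    "prod_list xs * (prod_list (rev xs) * t * prod_list xs) * prod_list (rev xs) = t"
    by (simp_all add: inv)
  then show ?thesis by auto
qed

lemma reflection_count_append:
  assumes "xs \<in> lists S"
  shows "reflection_count (xs @ ys) t
    = reflection_count xs t + reflection_count ys (prod_list (rev xs) * t * prod_list xs)"
proof -
  let ?t = "prod_list (rev xs) * t * prod_list xs"
  have "{j. j < length (xs @ ys) \<and> word_reflection (xs @ ys) j = t} =
     {j. j < length xs \<and> word_reflection xs j = t} \<union>
     (\<lambda>i. length xs + i) ` {i. i < length ys \<and> word_reflection ys i = ?t}"
  proof (rule set_eqI)
    fix j
    show "j \<in> {j. j < length (xs @ ys) \<and> word_reflection (xs @ ys) j = t} \<longleftrightarrow>
      j \<in> {j. j < length xs \<and> word_reflection xs j = t} \<union>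
        (\<lambda>i. length xs + i) ` {i. i < length ys \<and> word_reflection ys i = ?t}"
    proof (cases "j < length xs")
      case False
      then obtain i where "j = length xs + i" by (metis le_add_diff_inverse not_less)
      then show ?thesis
        using False by (auto simp: word_reflection_append_right conj_prod_list_eq_iff[OF assms])
    qed (auto simp: word_reflection_append_left)
  qed
  then show ?thesis unfolding reflection_count_def by (simp add: card_shifted_union)
qed

lemma relator_in_lists: "coxeter_relator S r \<Longrightarrow> r \<in> lists S"
  unfolding coxeter_relator_def by auto

lemma prod_list_relator: "coxeter_relator S r \<Longrightarrow> prod_list r = 1"
proof -
  assume "coxeter_relator S r"
  then obtain s t m where "(s * t) ^ m = 1" "r = concat (replicate m [s, t])"
    unfolding coxeter_relator_def by blast
  moreover have "prod_list (concat (replicate m [s, t])) = (s * t) ^ m" for m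
    by (induction m) (simp_all add: mult.assoc)
  ultimately show ?thesis by simp
qed

text \<open>The reflections of \<open>(st)\<^sup>m\<close> are \<open>(st)\<^sup>j s\<close>, \<open>j < 2m\<close>, and they are periodic with period \<open>m\<close>.\<close>
lemma even_reflection_count_relator:
  assumes "coxeter_relator S r" shows "even (reflection_count r x)"
proof -
  obtain s t m where st: "(s * t) ^ m = (1::'a)" and r: "r = concat (replicate m [s, t])"
    using assms unfolding coxeter_relator_def by blast
  have len: "length r = 2 * m" unfolding r by (simp add: length_concat sum_list_replicate)
  define A where "A = {j. j < m \<and> (s * t) ^ j * s = x}"
  have "{j. j < length r \<and> word_reflection r j = x} = A \<union> (\<lambda>i. m + i) ` A"
  proof (rule set_eqI)
    fix j
    show "j \<in> {j. j < length r \<and> word_reflection r j = x} \<longleftrightarrow> j \<in> A \<union> (\<lambda>i. m + i) ` A"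
    proof (cases "j < m")
      case False
      then obtain i where "j = m + i" by (metis le_add_diff_inverse not_less)
      then show ?thesis
        using False st len word_reflection_alternating[of j m s t]
        by (auto simp: A_def r power_add)
    qed (use len word_reflection_alternating[of j m s t] in \<open>auto simp: A_def r\<close>)
  qed
  then show ?thesis unfolding reflection_count_def by (simp add: card_shifted_union A_def)
qed

text \<open>A congruence may pass through words with letters outside \<open>S\<close>; only the letters in
  \<open>S\<close> are counted.\<close>
lemma coxeter_cong_reflection_parity:
  "coxeter_cong S u v \<Longrightarrow>
    odd (reflection_count (filter (\<lambda>x. x \<in> S) u) t) = odd (reflection_count (filter (\<lambda>x. x \<in> S) v) t)"
proof (induction arbitrary: t rule: coxeter_cong.induct)
  case (ins r xs ys)
  let ?xs = "filter (\<lambda>x. x \<in> S) xs"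
  have r: "r \<in> lists S" using relator_in_lists[OF ins] .
  then have "filter (\<lambda>x. x \<in> S) r = r" by (simp add: filter_id_conv in_lists_conv_set)
  moreover have "prod_list r = 1" "prod_list (rev r) = 1"
    using prod_list_relator[OF ins] prod_list_rev_inverse[OF r] by auto
  moreover have "?xs \<in> lists S" by auto
  ultimately show ?case
    using reflection_count_append[of ?xs] reflection_count_append[OF r]
      even_reflection_count_relator[OF ins] by simp
qed simp_all

lemma reflection_parity_eq:
  assumes "u \<in> lists S" "v \<in> lists S" "prod_list u = prod_list v"
  shows "odd (reflection_count u t) = odd (reflection_count v t)"
  using coxeter_cong_reflection_parity[OF prod_list_eq_imp_cong[OF assms]] assms(1,2)
  by (simp add: filter_id_conv in_lists_conv_set)

definition reduced :: "'a list \<Rightarrow> bool" where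
  "reduced xs \<longleftrightarrow> xs \<in> lists S \<and> length xs = cox_len S (prod_list xs)"

lemma cox_len_le_length: "xs \<in> lists S \<Longrightarrow> cox_len S (prod_list xs) \<le> length xs"
  unfolding cox_len_def by (rule Least_le) blast

lemma reduced_word_exists:
  assumes "w \<in> G\<^sub>R"
  obtains xs where "reduced xs" "prod_list xs = w"
proof -
  have "w \<in> {prod_list xs | xs. xs \<in> lists S}" using assms units_eq_words by simp
  then have "\<exists>n. \<exists>xs\<in>lists S. length xs = n \<and> prod_list xs = w" by auto
  then have "\<exists>xs\<in>lists S. length xs = cox_len S w \<and> prod_list xs = w"
    unfolding cox_len_def by (fact LeastI_ex)
  then obtain xs where "xs \<in> lists S" "length xs = cox_len S w" "prod_list xs = w" by blast
  then show ?thesis using that[of xs] by (simp add: reduced_def)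
qed

text \<open>The key computation: if the reflections at the letters \<open>a\<close> and \<open>b\<close> agree, then
  \<open>a = B b B\<^sup>-\<^sup>1\<close>, i.e. \<open>a B b = B\<close>, so both letters can be deleted.\<close>
lemma prod_list_delete_equal_reflections:
  assumes "A \<in> lists S" "B \<in> lists S" "a \<in> S" "b \<in> S"
    and "word_reflection (A @ a # B @ b # C) (length A)
       = word_reflection (A @ a # B @ b # C) (Suc (length A + length B))"
  shows "prod_list (A @ B @ C) = prod_list (A @ a # B @ b # C)"
proof -
  define X where "X = prod_list B * b * prod_list (rev B)"
  have "word_reflection (A @ a # B @ b # C) (length A) = prod_list A * a * prod_list (rev A)"
    using word_reflection_append_right[of A "a # B @ b # C" 0] by (simp add: word_reflection_Cons_0)
  moreover have "word_reflection (B @ b # C) (length B) = X"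
    using word_reflection_append_right[of B "b # C" 0] by (simp add: X_def word_reflection_Cons_0)
  then have "word_reflection (A @ a # B @ b # C) (Suc (length A + length B))
      = prod_list A * (a * X * a) * prod_list (rev A)"
    using word_reflection_append_right[of A "a # B @ b # C" "Suc (length B)"]
    by (simp add: word_reflection_Cons_Suc)
  ultimately have "prod_list A * a * prod_list (rev A) = prod_list A * (a * X * a) * prod_list (rev A)"
    using assms(5) by simp
  then have "a = prod_list (rev A) * (prod_list A * (a * X * a) * prod_list (rev A)) * prod_list A"
    by (rule conj_prod_list_eq_iff[OF assms(1), THEN iffD1])
  moreover have "a * X * a
      = prod_list (rev A) * (prod_list A * (a * X * a) * prod_list (rev A)) * prod_list A"
    by (rule conj_prod_list_eq_iff[OF assms(1), THEN iffD1]) (rule HOL.refl)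
  ultimately have axa: "a = a * X * a" by simp
  have aa: "a * a = 1" "b * b = 1" using S_involution assms(3,4) by simp_all
  have "X = (a * a) * X * (a * a)" using aa by simp
  also have "\<dots> = a * (a * X * a) * a" by (simp only: mult.assoc)
  also have "\<dots> = a * a * a" by (simp only: axa[symmetric])
  also have "\<dots> = a" using aa by simp
  finally have aX: "a = X" by simp
  have BB: "prod_list (rev B) * prod_list B = 1" using prod_list_rev_inverse[OF assms(2)] by simp
  have "a * prod_list B * b = prod_list B * b * (prod_list (rev B) * prod_list B) * b"
    by (simp only: aX X_def mult.assoc)
  also have "\<dots> = prod_list B" using BB aa by (simp add: mult.assoc)
  finally have "a * prod_list B * b = prod_list B" .
  then show ?thesis by (simp flip: mult.assoc)
qed

text \<open>If the reflections of \<open>xs\<close> were distinct, each would occur an odd number of times in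
  \<open>xs\<close>, hence in the shorter word \<open>ys\<close> with the same product, which has too few reflections.\<close>
lemma word_reflection_not_inj:
  assumes xs: "xs \<in> lists S" and ys: "ys \<in> lists S"
    and eq: "prod_list xs = prod_list ys" and shorter: "length ys < length xs"
  shows "\<not> inj_on (word_reflection xs) {..<length xs}"
proof
  assume inj: "inj_on (word_reflection xs) {..<length xs}"
  have "word_reflection xs ` {..<length xs} \<subseteq> word_reflection ys ` {..<length ys}"
  proof
    fix t assume "t \<in> word_reflection xs ` {..<length xs}"
    then obtain j where j: "j < length xs" "word_reflection xs j = t" by auto
    have "{k. k < length xs \<and> word_reflection xs k = t} = {j}"
      using inj j unfolding inj_on_def by auto
    then have "odd (reflection_count xs t)" unfolding reflection_count_def by simp
    then have "odd (reflection_count ys t)" using reflection_parity_eq[OF xs ys eq] by simp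
    then have "{k. k < length ys \<and> word_reflection ys k = t} \<noteq> {}"
      unfolding reflection_count_def by (metis card.empty even_zero)
    then show "t \<in> word_reflection ys ` {..<length ys}" by auto
  qed
  then have "card (word_reflection xs ` {..<length xs}) \<le> card (word_reflection ys ` {..<length ys})"
    by (intro card_mono) simp_all
  also have "\<dots> \<le> length ys"
    using card_image_le[of "{..<length ys}" "word_reflection ys"] by simp
  finally show False using card_image[OF inj] shorter by simp
qed

lemma deletion_condition:
  assumes xs: "xs \<in> lists S" and not_reduced: "cox_len S (prod_list xs) < length xs"
  obtains zs where "subseq zs xs" "length zs < length xs" "prod_list zs = prod_list xs"
proof -
  obtain ys where ys: "reduced ys" "prod_list ys = prod_list xs"
    using reduced_word_exists[OF prod_list_in_units[OF xs]] .
  then have "\<not> inj_on (word_reflection xs) {..<length xs}"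
    using word_reflection_not_inj[OF xs, of ys] not_reduced unfolding reduced_def by simp
  then obtain i j where ij: "i < j" "j < length xs" "word_reflection xs i = word_reflection xs j"
    unfolding inj_on_def lessThan_iff by (auto elim!: linorder_neqE_nat)
  define A where "A = take i xs"
  define B where "B = take (j - Suc i) (drop (Suc i) xs)"
  define C where "C = drop (Suc j) xs"
  have split: "xs = A @ xs ! i # B @ xs ! j # C"
    unfolding A_def B_def C_def using split_at_two_indices[OF ij(1,2)] .
  have len: "length A = i" "Suc (length A + length B) = j" using ij unfolding A_def B_def by simp_all
  have "A \<in> lists S" "B \<in> lists S" "xs ! i \<in> S" "xs ! j \<in> S"
    using xs by (subst (asm) split; simp)+
  then have "prod_list (A @ B @ C) = prod_list xs"
    using prod_list_delete_equal_reflections[of A B "xs ! i" "xs ! j" C] ij(3) len split by simp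
  moreover have "subseq (A @ B @ C) xs"
    by (subst split) (auto intro!: list_emb_Cons simp: subseq_append')
  moreover have "length (A @ B @ C) < length xs" using arg_cong[OF split, of length] by simp
  ultimately show ?thesis using that by blast
qed

lemma reduced_subword_exists:
  "xs \<in> lists S \<Longrightarrow> \<exists>ys. subseq ys xs \<and> reduced ys \<and> prod_list ys = prod_list xs"
proof (induction xs rule: length_induct)
  case (1 xs)
  show ?case
  proof (cases "cox_len S (prod_list xs) < length xs")
    case True
    then obtain zs where zs: "subseq zs xs" "length zs < length xs" "prod_list zs = prod_list xs"
      using deletion_condition[OF "1.prems"] by blast
    then obtain ys where "subseq ys zs" "reduced ys" "prod_list ys = prod_list zs"
      using "1.IH" subseq_in_lists[OF zs(1) "1.prems"] by blast
    then show ?thesis using zs(1,3) subseq_order.order_trans by auto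
  next
    case False
    then have "reduced xs"
      using "1.prems" cox_len_le_length[OF "1.prems"] unfolding reduced_def by simp
    then show ?thesis by auto
  qed
qed

lemma reduced_Cons: "reduced (x # xs) \<Longrightarrow> reduced xs"
proof -
  assume red: "reduced (x # xs)"
  then have x: "x \<in> S" and xs: "xs \<in> lists S" unfolding reduced_def by auto
  obtain ys where ys: "reduced ys" "prod_list ys = prod_list xs"
    using reduced_word_exists[OF prod_list_in_units[OF xs]] .
  have "length (x # xs) \<le> length (x # ys)"
    using red cox_len_le_length[of "x # ys"] x ys unfolding reduced_def by simp
  then show ?thesis using xs ys(1) cox_len_le_length[OF xs] unfolding reduced_def ys(2) by simp
qed

lemma WI_subset_units: "K \<subseteq> S \<Longrightarrow> WI K \<subseteq> G\<^sub>R"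
  unfolding WI_def using prod_list_in_units lists_mono[of K S] by auto

lemma WI_minv:
  assumes "K \<subseteq> S" "x \<in> WI K" shows "minv x \<in> WI K"
proof -
  obtain xs where xs: "xs \<in> lists K" "x = prod_list xs" using assms(2) unfolding WI_def by blast
  then have "minv x = prod_list (rev xs)" using minv_prod_list assms(1) lists_mono by blast
  then show ?thesis using prod_list_in_WI[of "rev xs" K] xs(1) by (simp add: in_lists_conv_set)
qed

lemma WI_reduced_word:
  assumes "K \<subseteq> S" "w \<in> WI K"
  obtains ys where "ys \<in> lists K" "reduced ys" "prod_list ys = w"
proof -
  obtain xs where xs: "xs \<in> lists K" "w = prod_list xs" using assms(2) unfolding WI_def by blast
  have "xs \<in> lists S" using xs(1) assms(1) lists_mono by blast
  then obtain ys where "subseq ys xs" "reduced ys" "prod_list ys = prod_list xs"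
    using reduced_subword_exists by blast
  then show ?thesis using that[of ys] subseq_in_lists[OF _ xs(1)] xs(2) by simp
qed

lemma cox_len_gen: "s \<in> S \<Longrightarrow> cox_len S s = 1"
proof -
  assume s: "s \<in> S"
  obtain xs where "reduced xs" "prod_list xs = s"
    using reduced_word_exists s S_units by blast
  moreover have "cox_len S s \<le> 1" using cox_len_le_length[of "[s]"] s by simp
  ultimately show ?thesis using S_not_one[OF s] unfolding reduced_def
    by (cases "cox_len S s") auto
qed

lemma gen_in_WI_imp_mem:
  assumes "K \<subseteq> S" "s \<in> S" "s \<in> WI K" shows "s \<in> K"
proof -
  obtain ys where "ys \<in> lists K" "reduced ys" "prod_list ys = s"
    using WI_reduced_word[OF assms(1,3)] .
  then have "ys \<in> lists K" "length ys = 1" using cox_len_gen[OF assms(2)] unfolding reduced_def by auto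
  then show ?thesis using \<open>prod_list ys = s\<close> by (cases ys) auto
qed

text \<open>Prepending \<open>x\<close> to a reduced \<open>K\<close>-word for \<open>x xs\<close> gives a non-reduced word. The
  deletion condition either removes \<open>x\<close> again, contradicting reducedness of the \<open>K\<close>-word, or
  expresses \<open>x\<close> through letters of \<open>K\<close>.\<close>
lemma reduced_Cons_head_in_WI:
  assumes KS: "K \<subseteq> S" and red: "reduced (x # xs)" and K: "prod_list (x # xs) \<in> WI K"
  shows "x \<in> K"
proof -
  let ?y = "prod_list (x # xs)"
  have x: "x \<in> S" "x \<in> G\<^sub>R" "x * x = 1" using red S_units S_involution unfolding reduced_def by auto
  have yG: "?y \<in> G\<^sub>R" using prod_list_in_units[of "x # xs"] red unfolding reduced_def by simp
  have xy: "x * ?y = prod_list xs" using x(3) by (simp flip: mult.assoc)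
  obtain zs where zs: "zs \<in> lists K" "reduced zs" "prod_list zs = ?y"
    using WI_reduced_word[OF KS K] .
  have zS: "zs \<in> lists S" using zs(1) KS lists_mono by blast
  have "x # zs \<in> lists S" using x zS by simp
  moreover have "cox_len S (prod_list (x # zs)) < length (x # zs)"
    using reduced_Cons[OF red] red zs(2,3) xy unfolding reduced_def by simp
  ultimately obtain vs where vs: "subseq vs (x # zs)" "length vs < length (x # zs)"
      "prod_list vs = x * ?y"
    using deletion_condition zs(3) by (metis prod_list.Cons)
  show ?thesis
  proof (cases "subseq vs zs")
    case True
    have "prod_list vs * minv ?y \<in> WI K"
      by (rule WI_mult[OF prod_list_in_WI[OF subseq_in_lists[OF True zs(1)]] WI_minv[OF KS K]])
    moreover have "prod_list vs * minv ?y = x"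
      using vs(3) minv_inverse(1)[OF yG] by (simp add: mult.assoc)
    ultimately show ?thesis using gen_in_WI_imp_mem[OF KS x(1)] by simp
  next
    case False
    obtain vs' where vs': "vs = x # vs'" "subseq vs' zs"
      using vs(1) False by (cases rule: list_emb.cases) auto
    then have "x * prod_list vs' = x * prod_list zs" using vs(3) zs(3) by simp
    then have "prod_list vs' = ?y" using units_cancel_left[OF x(2)] zs(3) by simp
    then have "cox_len S ?y \<le> length vs'"
      using cox_len_le_length[OF subseq_in_lists[OF vs'(2) zS]] by simp
    then show ?thesis using vs(2) vs'(1) zs(2,3) unfolding reduced_def by simp
  qed
qed

lemma reduced_word_in_WI:
  assumes "K \<subseteq> S" "reduced xs" "prod_list xs \<in> WI K"
  shows "xs \<in> lists K"
  using assms(2,3)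
proof (induction xs)
  case (Cons x xs)
  have xK: "x \<in> K" using reduced_Cons_head_in_WI[OF assms(1) Cons.prems] .
  have "x * prod_list (x # xs) = prod_list xs"
    using S_involution Cons.prems(1) unfolding reduced_def by (simp flip: mult.assoc)
  then have "prod_list xs \<in> WI K" using WI_mult[OF gen_in_WI[OF xK] Cons.prems(2)] by simp
  then show ?case using Cons.IH reduced_Cons[OF Cons.prems(1)] xK by simp
qed simp

lemma minimal_double_coset_subword:
  assumes min: "\<And>x y. x \<in> WI I \<Longrightarrow> y \<in> WI J \<Longrightarrow> cox_len S w \<le> cox_len S (x * w * y)"
    and Wd: "reduced Wd" "prod_list Wd = w"
    and V: "subseq V Wd" "prod_list V = x * w * y" and "x \<in> WI I" "y \<in> WI J"
  shows "V = Wd"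
proof -
  have VS: "V \<in> lists S" using subseq_in_lists[OF V(1)] Wd(1) unfolding reduced_def by simp
  have "length Wd = cox_len S w" using Wd unfolding reduced_def by simp
  also have "\<dots> \<le> cox_len S (x * w * y)" using min assms(6,7) .
  also have "\<dots> \<le> length V" using cox_len_le_length[OF VS] V(2) by simp
  finally have "length Wd \<le> length V" .
  then show ?thesis using list_emb_length[OF V(1)] by (intro subseq_same_length[OF V(1)]) simp
qed

text \<open>A deletion in a non-reduced word \<open>P w Q\<close>, with \<open>P, Q\<close> words in \<open>I, J\<close> and \<open>w\<close> written
  reduced, cannot touch the letters of \<open>w\<close> by minimality of \<open>w\<close>; so it shortens \<open>P\<close> or \<open>Q\<close>.\<close>
lemma minimal_double_coset_shorten:
  assumes IS: "I \<subseteq> S" and JS: "J \<subseteq> S"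
    and min: "\<And>x y. x \<in> WI I \<Longrightarrow> y \<in> WI J \<Longrightarrow> cox_len S w \<le> cox_len S (x * w * y)"
    and P: "P \<in> lists I" and Q: "Q \<in> lists J" and Wd: "reduced Wd" "prod_list Wd = w"
    and not_reduced: "\<not> reduced (P @ Wd @ Q)"
  obtains p' q' where "p' \<in> WI I" "q' \<in> WI J" "prod_list (P @ Wd @ Q) = p' * w * q'"
    "cox_len S p' + cox_len S q' < length P + length Q"
proof -
  have LS: "P @ Wd @ Q \<in> lists S"
    using P Q Wd(1) lists_mono[OF IS] lists_mono[OF JS] unfolding reduced_def by auto
  then have "cox_len S (prod_list (P @ Wd @ Q)) < length (P @ Wd @ Q)"
    using not_reduced cox_len_le_length[OF LS] unfolding reduced_def by simp
  then obtain zs where zs: "subseq zs (P @ Wd @ Q)" "length zs < length (P @ Wd @ Q)"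
      "prod_list zs = prod_list (P @ Wd @ Q)"
    using deletion_condition[OF LS] by blast
  obtain z1 z23 where z1: "zs = z1 @ z23" "subseq z1 P" "subseq z23 (Wd @ Q)"
    using zs(1) by (rule subseq_appendE)
  obtain z2 z3 where z2: "z23 = z2 @ z3" "subseq z2 Wd" "subseq z3 Q"
    using z1(3) by (rule subseq_appendE)
  have z1I: "z1 \<in> lists I" and z3J: "z3 \<in> lists J"
    using subseq_in_lists z1(2) P z2(3) Q by blast+
  define p' where "p' = prod_list z1"
  define q' where "q' = prod_list z3"
  have p': "p' \<in> WI I" "p' \<in> G\<^sub>R"
    unfolding p'_def using prod_list_in_WI[OF z1I] WI_subset_units[OF IS] by auto
  have q': "q' \<in> WI J" "q' \<in> G\<^sub>R"
    unfolding q'_def using prod_list_in_WI[OF z3J] WI_subset_units[OF JS] by auto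
  have zeq: "p' * prod_list z2 * q' = prod_list (P @ Wd @ Q)"
    using zs(3) unfolding z1(1) z2(1) p'_def q'_def by (simp add: mult.assoc)
  have "prod_list z2 = minv p' * (p' * prod_list z2 * q') * minv q'"
    by (simp add: mult.assoc minv_mult_cancel_left[OF p'(2)] minv_inverse(1)[OF q'(2)])
  also have "\<dots> = (minv p' * prod_list P) * w * (prod_list Q * minv q')"
    unfolding zeq using Wd(2) by (simp add: mult.assoc)
  finally have "z2 = Wd"
    using minimal_double_coset_subword[OF min Wd z2(2) _
        WI_mult[OF WI_minv[OF IS p'(1)] prod_list_in_WI[OF P]]
        WI_mult[OF prod_list_in_WI[OF Q] WI_minv[OF JS q'(1)]]]
    by blast
  have "cox_len S p' + cox_len S q' \<le> length z1 + length z3"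
    using cox_len_le_length lists_mono[OF IS] lists_mono[OF JS] z1I z3J
    unfolding p'_def q'_def by (simp add: add_le_mono subset_iff)
  also have "\<dots> < length P + length Q"
    using zs(2) \<open>z2 = Wd\<close> unfolding z1(1) z2(1) by simp
  finally show ?thesis using that p'(1) q'(1) zeq Wd(2) \<open>z2 = Wd\<close> by simp
qed

text \<open>Deodhar's lemma. Among the factorisations \<open>p w q\<close> of the given element take one with
  \<open>\<ell>(p) + \<ell>(q)\<close> minimal.\<close>
lemma minimal_double_coset_reduced_word:
  assumes IS: "I \<subseteq> S" and JS: "J \<subseteq> S" and wG: "w \<in> G\<^sub>R"
    and min: "\<And>x y. x \<in> WI I \<Longrightarrow> y \<in> WI J \<Longrightarrow> cox_len S w \<le> cox_len S (x * w * y)"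
    and p0: "p0 \<in> WI I" and q0: "q0 \<in> WI J"
  obtains P Wd Q where "P \<in> lists I" "Q \<in> lists J" "prod_list Wd = w"
    "reduced (P @ Wd @ Q)" "prod_list (P @ Wd @ Q) = p0 * w * q0"
proof -
  define D where "D = {(p, q). p \<in> WI I \<and> q \<in> WI J \<and> p0 * w * q0 = p * w * q}"
  define len2 where "len2 = (\<lambda>(p, q). cox_len S p + cox_len S q)"
  have "(p0, q0) \<in> D" unfolding D_def using p0 q0 by simp
  then obtain pq where pq: "pq \<in> D" "\<forall>pq'. pq' \<in> D \<longrightarrow> len2 pq \<le> len2 pq'"
    using ex_has_least_nat[of "\<lambda>pq. pq \<in> D"] by blast
  obtain p q where pq_eq: "pq = (p, q)" by (cases pq)
  have p: "p \<in> WI I" "q \<in> WI J" "p0 * w * q0 = p * w * q" using pq(1) unfolding D_def pq_eq by auto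
  obtain P where P: "P \<in> lists I" "reduced P" "prod_list P = p" using WI_reduced_word[OF IS p(1)] .
  obtain Q where Q: "Q \<in> lists J" "reduced Q" "prod_list Q = q" using WI_reduced_word[OF JS p(2)] .
  obtain Wd where Wd: "reduced Wd" "prod_list Wd = w" using reduced_word_exists[OF wG] .
  have prod: "prod_list (P @ Wd @ Q) = p0 * w * q0" using P(3) Q(3) Wd(2) p(3) by (simp add: mult.assoc)
  have "reduced (P @ Wd @ Q)"
  proof (rule ccontr)
    assume "\<not> reduced (P @ Wd @ Q)"
    then obtain p' q' where p'q': "p' \<in> WI I" "q' \<in> WI J" "prod_list (P @ Wd @ Q) = p' * w * q'"
        "cox_len S p' + cox_len S q' < length P + length Q"
      using minimal_double_coset_shorten[OF IS JS min P(1) Q(1) Wd] by blast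
    then have "(p', q') \<in> D" using prod unfolding D_def by simp
    then have "len2 (p, q) \<le> len2 (p', q')" using pq(2) unfolding pq_eq by blast
    then show False using p'q'(4) P(2,3) Q(2,3) unfolding len2_def reduced_def by simp
  qed
  then show ?thesis using that P(1) Q(1) Wd(2) prod by blast
qed

lemma minimal_double_coset_parabolic:
  assumes IS: "I \<subseteq> S" and JS: "J \<subseteq> S" and KS: "K \<subseteq> S" and wG: "w \<in> G\<^sub>R"
    and min: "\<And>x y. x \<in> WI I \<Longrightarrow> y \<in> WI J \<Longrightarrow> cox_len S w \<le> cox_len S (x * w * y)"
    and p0: "p0 \<in> WI I" and q0: "q0 \<in> WI J" and K: "p0 * w * q0 \<in> WI K"
  obtains p q where "w \<in> WI K" "p \<in> WI I" "q \<in> WI J \<inter> WI K" "p0 * w * q0 = p * w * q"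
proof -
  obtain P Wd Q where P: "P \<in> lists I" "Q \<in> lists J" "prod_list Wd = w"
      "reduced (P @ Wd @ Q)" "prod_list (P @ Wd @ Q) = p0 * w * q0"
    using minimal_double_coset_reduced_word[OF IS JS wG min p0 q0] .
  then have "P @ Wd @ Q \<in> lists K" using reduced_word_in_WI[OF KS P(4)] K by simp
  then have "Wd \<in> lists K" "Q \<in> lists K" by simp_all
  then show ?thesis
    using that[of "prod_list P" "prod_list Q"] P prod_list_in_WI[of Wd K] prod_list_in_WI[of Q]
      prod_list_in_WI[of P] by (simp add: mult.assoc)
qed

end

section \<open>Renner--Coxeter systems\<close>

locale renner_coxeter =
  fixes \<Lambda> S :: "'a::monoid_mult set"
  assumes gen_renner_coxeter: "gen_renner_coxeter \<Lambda> S"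
begin

lemma Lambda_subset_idems: "\<Lambda> \<subseteq> E\<^sub>R"
  and Lambda_orbit_rep: "x \<in> E\<^sub>R \<Longrightarrow> \<exists>!k. k \<in> \<Lambda> \<and> (\<exists>u\<in>G\<^sub>R. u * k * minv u = x)"
  and idems_commute: "x \<in> E\<^sub>R \<Longrightarrow> y \<in> E\<^sub>R \<Longrightarrow> x * y = y * x"
  and ileq_conj_Lambda: "x \<in> E\<^sub>R \<Longrightarrow> y \<in> E\<^sub>R \<Longrightarrow> ileq x y \<Longrightarrow>
     \<exists>u\<in>G\<^sub>R. \<exists>k\<in>\<Lambda>. \<exists>l\<in>\<Lambda>. ileq k l \<and> u * k * minv u = x \<and> u * l * minv u = y"
  and Wc_parabolic: "k \<in> \<Lambda> \<Longrightarrow> \<exists>I\<subseteq>S. Wc k = WI I"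
  and Wstar_parabolic: "k \<in> \<Lambda> \<Longrightarrow> \<exists>I\<subseteq>S. Wstar k = WI I"
  and lambda_star_mono: "k \<in> \<Lambda> \<Longrightarrow> l \<in> \<Lambda> \<Longrightarrow> ileq k l \<Longrightarrow> lambda_star S k \<subseteq> lambda_star S l"
  using gen_renner_coxeter unfolding gen_renner_coxeter_def factorisable_def by simp_all

sublocale coxeter S
  using gen_renner_coxeter unfolding gen_renner_coxeter_def by unfold_locales simp

lemma Lambda_conj_eq:
  assumes "k \<in> \<Lambda>" "l \<in> \<Lambda>" "u \<in> G\<^sub>R" "v \<in> G\<^sub>R" "u * k * minv u = v * l * minv v"
  shows "k = l"
proof -
  have "v * l * minv v \<in> E\<^sub>R"
    using conj_idem[OF minv_inverse(2)[OF assms(4)]] Lambda_subset_idems assms(2) by blast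
  from Lambda_orbit_rep[OF this] show ?thesis
    using assms(1-4) assms(5)[symmetric] by (metis (no_types, lifting))
qed

lemma Wc_lam: "k \<in> \<Lambda> \<Longrightarrow> lam S k \<subseteq> S \<and> Wc k = WI (lam S k)"
  unfolding lam_def using Wc_parabolic by (rule someI_ex) blast

lemma ileq_Lambda_conj:
  assumes e: "e \<in> \<Lambda>" and g: "g \<in> E\<^sub>R" "ileq g e"
  obtains u k where "u \<in> Wc e" "k \<in> \<Lambda>" "ileq k e" "u * k * minv u = g"
proof -
  obtain u k l where ukl: "u \<in> G\<^sub>R" "k \<in> \<Lambda>" "l \<in> \<Lambda>" "ileq k l"
      "u * k * minv u = g" "u * l * minv u = e"
    using ileq_conj_Lambda[OF g(1) _ g(2)] e Lambda_subset_idems by blast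
  have "l = e" using Lambda_conj_eq[OF ukl(3) e ukl(1) one_in_units] ukl(6) by (simp add: minv_one)
  then show ?thesis using that ukl Wc_if_conj_fixed by blast
qed

lemma Wc_split:
  assumes "k \<in> \<Lambda>" "e \<in> \<Lambda>" "ileq k e" "x \<in> Wc k"
  obtains b a where "x = b * a" "b \<in> Wc e \<inter> Wc k" "a \<in> Wstar k"
proof -
  obtain L where L: "L \<subseteq> S" "Wc k = WI L" using Wc_parabolic[OF assms(1)] by blast
  obtain xs where xs: "xs \<in> lists L" "x = prod_list xs" using assms(4) L(2) unfolding WI_def by blast
  have "\<forall>s\<in>set xs. s \<in> Wc e \<inter> Wc k \<or> s \<in> Wstar k"
  proof
    fix s assume "s \<in> set xs"
    then have s: "s \<in> L" "s \<in> S" using xs(1) L(1) by auto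
    then have sk: "s \<in> Wc k" using L(2) gen_in_WI by simp
    show "s \<in> Wc e \<inter> Wc k \<or> s \<in> Wstar k"
    proof (cases "s * k = k")
      case True
      then show ?thesis using sk unfolding Wc_def Wstar_def by auto
    next
      case False
      then have "s \<in> lambda_star S k" using s(2) sk unfolding lambda_star_def Wc_def by auto
      then have "s \<in> lambda_star S e" using lambda_star_mono assms(1-3) by blast
      then show ?thesis using sk S_units unfolding lambda_star_def Wc_def by auto
    qed
  qed
  then obtain b a where "prod_list xs = b * a" "b \<in> Wc e \<inter> Wc k" "a \<in> Wstar k"
    by (rule prod_list_Wc_Wstar_split)
  then show ?thesis using that xs(2) by simp
qed

lemma common_Lambda_conjugate:
  assumes e: "e \<in> \<Lambda>" and f: "f \<in> \<Lambda>" and wG: "w \<in> G\<^sub>R"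
  obtains k u v where "k \<in> \<Lambda>" "ileq k e" "u \<in> Wc e" "v \<in> Wc f"
    "u * k * minv u = (w * v) * k * minv (w * v)" "v * k * minv v = minv w * e * w * f"
proof -
  have idems: "e \<in> E\<^sub>R" "f \<in> E\<^sub>R" using e f Lambda_subset_idems by auto
  have ef: "w * f * minv w \<in> E\<^sub>R" "minv w * e * w \<in> E\<^sub>R"
    using conj_idem minv_inverse[OF wG] idems by blast+
  define g where "g = e * (w * f * minv w)"
  have g: "g \<in> E\<^sub>R" "ileq g e"
    unfolding g_def using idems_mult_ileq[OF idems(1) ef(1)] idems_commute idems ef by auto
  obtain u k where uk: "u \<in> Wc e" "k \<in> \<Lambda>" "ileq k e" "u * k * minv u = g"
    using ileq_Lambda_conj[OF e g] .
  define h where "h = minv w * e * w * f"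
  have h: "h \<in> E\<^sub>R" "ileq h f"
    unfolding h_def using idems_mult_ileq[OF ef(2) idems(2)] idems_commute idems ef by auto
  obtain v l where vl: "v \<in> Wc f" "l \<in> \<Lambda>" "ileq l f" "v * l * minv v = h"
    using ileq_Lambda_conj[OF f h] .
  have uG: "u \<in> G\<^sub>R" and vG: "v \<in> G\<^sub>R" using uk(1) vl(1) unfolding Wc_def by auto
  have "(w * v) * l * minv (w * v) = w * (v * l * minv v) * minv w"
    by (simp add: minv_mult[OF wG vG] mult.assoc)
  also have "\<dots> = w * h * minv w" using vl(4) by simp
  also have "\<dots> = g"
    unfolding h_def g_def using mult_minv_cancel_left[OF wG] by (simp add: mult.assoc)
  finally have wv: "(w * v) * l * minv (w * v) = g" .
  then have "k = l"
    using Lambda_conj_eq[OF uk(2) vl(2) uG units_mult[OF wG vG]] uk(4) by simp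
  then show ?thesis using that uk wv vl h_def by simp
qed

lemma Red_in_Wstar_conj:
  assumes e: "e \<in> \<Lambda>" and f: "f \<in> \<Lambda>" and w: "w \<in> Red S e f"
  shows "\<exists>k\<in>\<Lambda>. w \<in> Wstar k \<and> minv w * e * w * f = k"
proof -
  have wG: "w \<in> G\<^sub>R"
    and min: "\<And>x y. x \<in> WI (lam S e) \<Longrightarrow> y \<in> WI (lam S f) \<Longrightarrow> cox_len S w \<le> cox_len S (x * w * y)"
    using w unfolding Red_def by auto
  have I: "lam S e \<subseteq> S" "Wc e = WI (lam S e)" and J: "lam S f \<subseteq> S" "Wc f = WI (lam S f)"
    using Wc_lam e f by auto
  obtain k u v where kuv: "k \<in> \<Lambda>" "ileq k e" "u \<in> Wc e" "v \<in> Wc f"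
      "u * k * minv u = (w * v) * k * minv (w * v)" "v * k * minv v = minv w * e * w * f"
    using common_Lambda_conjugate[OF e f wG] .
  have uG: "u \<in> G\<^sub>R" and vG: "v \<in> G\<^sub>R" using kuv(3,4) unfolding Wc_def by auto
  have "minv u * (w * v) \<in> Wc k" using conj_eq_imp_Wc[OF uG units_mult[OF wG vG] kuv(5)] .
  then obtain b a where ba: "minv u * (w * v) = b * a" "b \<in> Wc e \<inter> Wc k" "a \<in> Wstar k"
    using Wc_split[OF kuv(1) e kuv(2)] by blast
  define c where "c = minv b * minv u"
  have c: "c \<in> Wc e" unfolding c_def using Wc_mult Wc_minv ba(2) kuv(3) by blast
  have bG: "b \<in> G\<^sub>R" using ba(2) unfolding Wc_def by auto
  have a: "a = c * w * v"
    unfolding c_def using ba(1) minv_mult_cancel_left[OF bG, of a] by (simp add: mult.assoc)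
  obtain K where K: "K \<subseteq> S" "Wstar k = WI K" using Wstar_parabolic[OF kuv(1)] by blast
  have cvK: "c \<in> WI (lam S e)" "v \<in> WI (lam S f)" "c * w * v \<in> WI K"
    using c kuv(4) ba(3) a I(2) J(2) K(2) by simp_all
  obtain p q where pq: "w \<in> WI K" "p \<in> WI (lam S e)" "q \<in> WI (lam S f) \<inter> WI K"
      "c * w * v = p * w * q"
    using minimal_double_coset_parabolic[OF I(1) J(1) K(1) wG min cvK] by blast
  have "q \<in> Wc f" "q \<in> Wstar k" using pq(3) J(2) K(2) by auto
  then have "minv w * e * w * f = k"
    using double_coset_twisted_conj_eq[OF c _ kuv(4) _ _ wG pq(4) kuv(6)] pq(2) I(2) by simp
  then show ?thesis using kuv(1) pq(1) K(2) by blast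
qed

end

theorem mainTheorem10:
  fixes \<Lambda> S :: "'a::monoid_mult set" and e f w :: 'a
  assumes "gen_renner_coxeter \<Lambda> S"
    and "e \<in> \<Lambda>" and "f \<in> \<Lambda>"
    and "w \<in> Red S e f"
  shows "(\<exists>h\<in>\<Lambda>. w \<in> Wc h \<and> e * w * f = w * h) \<and>
         (\<forall>h\<in>\<Lambda>. w \<in> Wc h \<and> e * w * f = w * h \<longrightarrow> w \<in> Wstar h \<and> w * h = h)"
proof -
  interpret renner_coxeter \<Lambda> S by (rule renner_coxeter.intro) fact
  obtain k where k: "k \<in> \<Lambda>" "w \<in> Wstar k" "minv w * e * w * f = k"
    using Red_in_Wstar_conj[OF assms(2-4)] by blast
  have wG: "w \<in> G\<^sub>R" using assms(4) unfolding Red_def by simp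
  have "e * w * f = w * (minv w * e * w * f)"
    using mult_minv_cancel_left[OF wG] by (simp add: mult.assoc)
  then have ewf: "e * w * f = w * k" using k(3) by simp
  have unique: "h = k" if "e * w * f = w * h" for h
    using units_cancel_left[OF wG HOL.trans[OF that[symmetric] ewf]] .
  have wk: "w \<in> Wc k" "w * k = k" using k(2) Wstar_subset_Wc unfolding Wstar_def by auto
  show ?thesis
  proof
    show "\<exists>h\<in>\<Lambda>. w \<in> Wc h \<and> e * w * f = w * h" using k(1) wk(1) ewf by blast
    show "\<forall>h\<in>\<Lambda>. w \<in> Wc h \<and> e * w * f = w * h \<longrightarrow> w \<in> Wstar h \<and> w * h = h"
      using unique k(2) wk(2) by blast
  qed
qed

end
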